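(* \begin{enumerate} \item Both maps $u,v:V(\mathcal{T}\mathcal{L})\mapsto \mathbb C$ define triangular lattices with $MR=-1$. In other words, if $\mathfrak{z}_1,\mathfrak{z}_2,\ldots,\mathfrak{z}_6$ are the vertices (listed counterclockwise) of any elementary hexagon of any of the hexagonal sublattices $\mathcal{H}\mathcal{L}_j$ $(j=0,1,2)$, and if $u_k=u(\mathfrak{z}_k)$ and $v_k=v(\mathfrak{z}_k)$, then there hold both the equations \begin{equation} M(u_1,u_2,\ldots,u_6)=-1 \end{equation} and \begin{equation} M(v_1,v_2,\ldots,v_6)=-1. \end{equation} \item Given a triangular lattice $u:V(\mathcal{T}\mathcal{L})\mapsto\mathbb C$ with $MR=-1$, there exists a unique, up to an affine transformation $v\mapsto av+b$, function $v:V(\mathcal{T}\mathcal{L})\mapsto\mathbb C$ such that the equation $\frac{u(\mathfrak{z}_2)-u(\mathfrak{z}_1)}{u(\mathfrak{z}_3)-u(\mathfrak{z}_2)}=\frac{v(\mathfrak{z}_3)-v(\mathfrak{z}_2)}{v(\mathfrak{z}_1)-v(\mathfrak{z}_3)}$ is satisfied everywhere. This function also defines a triangular lattice with $MR=-1$. \item Given a pair of complex--valued functions $(u,v)$ defined on $V(\mathcal{T}\mathcal{L})$ and satisfying this equation everywhere, there exists a unique, up to an affine transformation, function $w:V(\mathcal{T}\mathcal{L})\mapsto\mathbb C$ such that the pairs $(v,w)$ and $(w,u)$ satisfy the same equation. The function $w$ also defines a triangular lattice with $MR=-1$. \end{enumerate}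
   Context: $\mathcal{T}\mathcal{L}$ is the regular triangular lattice with vertices $k+\ell\omega+m\omega^2$, $\omega=e^{2\pi i/3}$, and edges of length 1; $\mathcal{H}\mathcal{L}_j$ ($j=0,1,2$) is its hexagonal sublattice with vertices satisfying $k+\ell+m\not\equiv j\pmod 3$, whose elementary hexagons have vertices $\mathfrak{z}'+\varepsilon^k$, $\varepsilon=e^{\pi i/3}$, around centers $\mathfrak{z}'$ with $k+\ell+m\equiv j\pmod 3$. The multi-ratio is $M(w_1,\dots,w_6)=\frac{(w_1-w_2)(w_3-w_4)(w_5-w_6)}{(w_2-w_3)(w_4-w_5)(w_6-w_1)}$; a map on $V(\mathcal{T}\mathcal{L})$ defines a triangular lattice with $MR=-1$ if this multi-ratio equals $-1$ on every elementary hexagon (vertices counterclockwise) of every $\mathcal{H}\mathcal{L}_j$. In part 1, $u,v$ are the fields of a solution of the $fgh$--system, i.e. they satisfy the equation $\frac{u(\mathfrak{z}_2)-u(\mathfrak{z}_1)}{u(\mathfrak{z}_3)-u(\mathfrak{z}_2)}=\frac{v(\mathfrak{z}_3)-v(\mathfrak{z}_2)}{v(\mathfrak{z}_1)-v(\mathfrak{z}_3)}$ on every elementary triangle with consecutive vertices $\mathfrak{z}_1,\mathfrak{z}_2,\mathfrak{z}_3$ such that $\mathfrak{z}_2-\mathfrak{z}_1,\mathfrak{z}_3-\mathfrak{z}_2,\mathfrak{z}_1-\mathfrak{z}_3\in\{1,\omega,\omega^2\}$ (positively oriented triangle). *)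

theory Defs
  imports Complex_Main
begin

definition omega :: complex where "omega = cis (2 * pi / 3)"
definition epsilon :: complex where "epsilon = cis (pi / 3)"

definition TL_V :: "complex set" where
  "TL_V = {of_int k + of_int l * omega + of_int m * omega ^ 2 | k l m :: int. True}"

text \<open>Centers of the elementary hexagons of HL_j: vertices with k + l + m = j (mod 3).\<close>
definition hex_center :: "int \<Rightarrow> complex \<Rightarrow> bool" where
  "hex_center j z \<longleftrightarrow>
     (\<exists>k l m :: int. z = of_int k + of_int l * omega + of_int m * omega ^ 2 \<and> (k + l + m) mod 3 = j mod 3)"

definition multiratio :: "complex \<Rightarrow> complex \<Rightarrow> complex \<Rightarrow> complex \<Rightarrow> complex \<Rightarrow> complex \<Rightarrow> complex" where
  "multiratio w1 w2 w3 w4 w5 w6 =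
     ((w1 - w2) * (w3 - w4) * (w5 - w6)) / ((w2 - w3) * (w4 - w5) * (w6 - w1))"

definition MR_minus_one :: "(complex \<Rightarrow> complex) \<Rightarrow> bool" where
  "MR_minus_one u \<longleftrightarrow>
     (\<forall>j \<in> {0, 1, 2 :: int}. \<forall>z. hex_center j z \<longrightarrow>
        multiratio (u (z + epsilon ^ 0)) (u (z + epsilon ^ 1)) (u (z + epsilon ^ 2))
                   (u (z + epsilon ^ 3)) (u (z + epsilon ^ 4)) (u (z + epsilon ^ 5)) = -1)"

definition pos_triangle :: "complex \<Rightarrow> complex \<Rightarrow> complex \<Rightarrow> bool" where
  "pos_triangle z1 z2 z3 \<longleftrightarrow>
     z1 \<in> TL_V \<and>
     z2 - z1 \<in> {1, omega, omega ^ 2} \<and> z3 - z2 \<in> {1, omega, omega ^ 2} \<and> z1 - z3 \<in> {1, omega, omega ^ 2}"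

text \<open>The ratios
  are required to be genuine (non-degenerate): the values of u and v at the ends of every
  edge of the triangle are distinct.\<close>
definition fgh_eq :: "(complex \<Rightarrow> complex) \<Rightarrow> (complex \<Rightarrow> complex) \<Rightarrow> bool" where
  "fgh_eq u v \<longleftrightarrow>
     (\<forall>z1 z2 z3. pos_triangle z1 z2 z3 \<longrightarrow>
        u z1 \<noteq> u z2 \<and> u z2 \<noteq> u z3 \<and> u z3 \<noteq> u z1 \<and>
        v z1 \<noteq> v z2 \<and> v z2 \<noteq> v z3 \<and> v z3 \<noteq> v z1 \<and>
        (u z2 - u z1) / (u z3 - u z2) = (v z3 - v z2) / (v z1 - v z3))"

end

theory Submission
  imports Defs
begin

text \<open>On a single triangle the fgh-equation says that the edge vectors of \<open>v\<close> are those of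
  \<open>u\<close>, shifted cyclically and multiplied by a common factor \<open>m \<noteq> 0\<close>. Around a lattice
  vertex the six triangles then give six relations whose product is the identity \<open>M = -1\<close> for
  the hexagon of neighbours, both for \<open>u\<close> and, by the symmetry of these relations, for \<open>v\<close>.

  Conversely, given \<open>u\<close> with \<open>MR = -1\<close>, the factors \<open>m\<close> are determined up to a global
  constant by requiring that two adjacent triangles prescribe the same increment of \<open>v\<close> on their
  common edge; \<open>M = -1\<close> around a vertex is exactly the consistency of this requirement, so the
  factors exist on the simply connected lattice, and \<open>v\<close> is obtained by summing the increments.
  Two partners \<open>v\<close>, \<open>w\<close> of the same \<open>u\<close> have proportional increments on every triangle,
  with a factor that is passed on across common edges, hence \<open>w = a v + b\<close>. The third part is
  the second one applied to \<open>v\<close>, since the relation is cyclic: \<open>(u, v)\<close> and \<open>(v, w)\<close> give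
  \<open>(w, u)\<close>.\<close>

section \<open>The triangular lattice\<close>

lemma omega_eq: "omega = Complex (-1/2) (sqrt 3 / 2)"
  by (simp add: omega_def cis.ctr cos_120 sin_120)

lemma omega_squared: "omega ^ 2 = -1 - omega"
  by (simp add: omega_eq power2_eq_square complex_eq_iff field_simps)

lemma epsilon_powers:
  "epsilon ^ 0 = 1" "epsilon ^ 1 = 1 + omega" "epsilon ^ 2 = omega"
  "epsilon ^ 3 = -1" "epsilon ^ 4 = -1 - omega" "epsilon ^ 5 = - omega"
proof -
  have eps: "epsilon = 1 + omega"
    by (simp add: epsilon_def omega_eq cis.ctr cos_60 sin_60 complex_eq_iff)
  have sq: "epsilon ^ 2 = omega"
    by (simp add: eps power2_eq_square algebra_simps omega_squared[unfolded power2_eq_square])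
  have cube: "epsilon ^ 3 = -1"
    using sq
    by (simp add: eps power3_eq_cube algebra_simps omega_squared[unfolded power2_eq_square])
  show "epsilon ^ 0 = 1" "epsilon ^ 1 = 1 + omega" "epsilon ^ 2 = omega" "epsilon ^ 3 = -1"
    using sq cube eps by simp_all
  show "epsilon ^ 4 = -1 - omega"
  proof -
    have "epsilon ^ 4 = epsilon ^ 3 * epsilon" by (simp flip: power_Suc2)
    then show ?thesis using cube eps by (simp add: algebra_simps)
  qed
  show "epsilon ^ 5 = - omega"
  proof -
    have "epsilon ^ 5 = epsilon ^ 3 * epsilon ^ 2" by (simp flip: power_add)
    then show ?thesis using sq cube by simp
  qed
qed

definition lattice_pt :: "int \<Rightarrow> int \<Rightarrow> complex" where
  "lattice_pt x y = of_int x + of_int y * omega"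

lemma lattice_pt_eq_iff: "lattice_pt x y = lattice_pt x' y' \<longleftrightarrow> x = x' \<and> y = y'"
  by (auto simp: lattice_pt_def omega_eq complex_eq_iff)

lemma TL_V_iff: "z \<in> TL_V \<longleftrightarrow> (\<exists>x y. z = lattice_pt x y)"
proof -
  have "of_int k + of_int l * omega + of_int m * omega ^ 2 = lattice_pt (k - m) (l - m)" for k l m
    by (simp add: lattice_pt_def omega_squared algebra_simps)
  moreover have "lattice_pt x y = of_int x + of_int y * omega + of_int 0 * omega ^ 2" for x y
    by (simp add: lattice_pt_def)
  ultimately show ?thesis
    unfolding TL_V_def by blast
qed

lemma lattice_pt_in_TL_V: "lattice_pt x y \<in> TL_V"
  by (auto simp: TL_V_iff)

lemma lattice_pt_shifts [simp]:
  "lattice_pt x y + 1 = lattice_pt (x + 1) y"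
  "lattice_pt x y + omega = lattice_pt x (y + 1)"
  "lattice_pt x y + (1 + omega) = lattice_pt (x + 1) (y + 1)"
  "lattice_pt x y + -1 = lattice_pt (x - 1) y"
  "lattice_pt x y + (-1 - omega) = lattice_pt (x - 1) (y - 1)"
  "lattice_pt x y + - omega = lattice_pt x (y - 1)"
  by (simp_all add: lattice_pt_def algebra_simps)

lemma TL_V_add_unit:
  assumes "z \<in> TL_V" "d \<in> {1, omega, omega ^ 2}"
  shows "z + d \<in> TL_V"
proof -
  obtain x y where "z = lattice_pt x y" using assms(1) TL_V_iff by blast
  then show ?thesis
    using assms(2) lattice_pt_shifts(1,2,5)[of x y] unfolding omega_squared TL_V_iff by blast
qed

lemma hex_center_in_TL_V: "hex_center j z \<Longrightarrow> z \<in> TL_V"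
  unfolding hex_center_def TL_V_def by blast

lemma TL_V_hex_center:
  assumes "z \<in> TL_V"
  obtains j where "j \<in> {0, 1, 2}" "hex_center j z"
proof -
  obtain k l m where z: "z = of_int k + of_int l * omega + of_int m * omega ^ 2"
    using assms unfolding TL_V_def by blast
  have "(k + l + m) mod 3 \<in> {0, 1, 2 :: int}" by auto
  moreover have "hex_center ((k + l + m) mod 3) z"
    unfolding hex_center_def using z by (intro exI[of _ k] exI[of _ l] exI[of _ m]) simp
  ultimately show ?thesis by (rule that)
qed

lemma pos_triangles_around:
  assumes "z \<in> TL_V"
  shows "pos_triangle z (z + epsilon ^ 0) (z + epsilon ^ 1)"
    and "pos_triangle z (z + epsilon ^ 2) (z + epsilon ^ 1)"
    and "pos_triangle z (z + epsilon ^ 2) (z + epsilon ^ 3)"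
    and "pos_triangle z (z + epsilon ^ 4) (z + epsilon ^ 3)"
    and "pos_triangle z (z + epsilon ^ 4) (z + epsilon ^ 5)"
    and "pos_triangle z (z + epsilon ^ 0) (z + epsilon ^ 5)"
  using assms unfolding pos_triangle_def epsilon_powers omega_squared
  by (simp_all add: algebra_simps)

lemma pos_triangle_up_down:
  assumes "z \<in> TL_V"
  shows "pos_triangle z (z + 1) (z + (1 + omega))" "pos_triangle z (z + omega) (z + (1 + omega))"
  using pos_triangles_around(1,2)[OF assms] unfolding epsilon_powers by simp_all

lemma pos_triangle_cases:
  assumes "pos_triangle z1 z2 z3"
  obtains (up) z where "z \<in> TL_V"
      "(z1, z2, z3) = (z, z + 1, z + (1 + omega))
       \<or> (z2, z3, z1) = (z, z + 1, z + (1 + omega))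
       \<or> (z3, z1, z2) = (z, z + 1, z + (1 + omega))"
  | (down) z where "z \<in> TL_V"
      "(z1, z2, z3) = (z, z + omega, z + (1 + omega))
       \<or> (z2, z3, z1) = (z, z + omega, z + (1 + omega))
       \<or> (z3, z1, z2) = (z, z + omega, z + (1 + omega))"
proof -
  define d1 d2 where "d1 = z2 - z1" and "d2 = z3 - z2"
  have units: "d1 \<in> {1, omega, -1 - omega}" "d2 \<in> {1, omega, -1 - omega}"
    "- d1 - d2 \<in> {1, omega, -1 - omega}"
    using assms unfolding pos_triangle_def d1_def d2_def omega_squared
    by (simp_all add: algebra_simps)
  have in_TL_V: "z1 \<in> TL_V" "z2 \<in> TL_V" "z3 \<in> TL_V"
    using assms TL_V_add_unit[of z1 "z2 - z1"] TL_V_add_unit[of z2 "z3 - z2"]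
    unfolding pos_triangle_def by auto
  have "d1 \<noteq> d2"
  proof
    assume "d1 = d2"
    then show False
      using units(1,3) by (auto simp: omega_eq complex_eq_iff)
  qed
  then consider (a) "d1 = 1" "d2 = omega" | (b) "d1 = omega" "d2 = -1 - omega"
    | (c) "d1 = -1 - omega" "d2 = 1" | (d) "d1 = omega" "d2 = 1"
    | (e) "d1 = 1" "d2 = -1 - omega" | (f) "d1 = -1 - omega" "d2 = omega"
    using units(1,2) by blast
  moreover have z2: "z2 = z1 + d1" and z3: "z3 = z1 + d1 + d2"
    by (simp_all add: d1_def d2_def)
  ultimately show thesis
  proof cases
    case a
    show thesis using up[of z1] in_TL_V unfolding z2 z3 a by (simp add: algebra_simps)
  next
    case b
    show thesis using up[of z3] in_TL_V unfolding z2 z3 b by (simp add: algebra_simps)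
  next
    case c
    show thesis using up[of z2] in_TL_V unfolding z2 z3 c by (simp add: algebra_simps)
  next
    case d
    show thesis using down[of z1] in_TL_V unfolding z2 z3 d by (simp add: algebra_simps)
  next
    case e
    show thesis using down[of z3] in_TL_V unfolding z2 z3 e by (simp add: algebra_simps)
  next
    case f
    show thesis using down[of z2] in_TL_V unfolding z2 z3 f by (simp add: algebra_simps)
  qed
qed

section \<open>Multi-ratios\<close>

definition hexagon_multiratio :: "(complex \<Rightarrow> complex) \<Rightarrow> complex \<Rightarrow> complex" where
  "hexagon_multiratio u z =
     multiratio (u (z + epsilon ^ 0)) (u (z + epsilon ^ 1)) (u (z + epsilon ^ 2))
                (u (z + epsilon ^ 3)) (u (z + epsilon ^ 4)) (u (z + epsilon ^ 5))"

lemma MR_minus_one_iff: "MR_minus_one u \<longleftrightarrow> (\<forall>z \<in> TL_V. hexagon_multiratio u z = -1)"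
proof -
  have "MR_minus_one u \<longleftrightarrow>
      (\<forall>j \<in> {0, 1, 2}. \<forall>z. hex_center j z \<longrightarrow> hexagon_multiratio u z = -1)"
    by (simp only: MR_minus_one_def hexagon_multiratio_def)
  then show ?thesis
    by (meson TL_V_hex_center hex_center_in_TL_V)
qed

lemma multiratio_translate:
  "multiratio (w1 - c) (w2 - c) (w3 - c) (w4 - c) (w5 - c) (w6 - c) = multiratio w1 w2 w3 w4 w5 w6"
  by (simp add: multiratio_def)

lemma multiratio_rotate: "multiratio w1 w2 w3 w4 w5 w6 = inverse (multiratio w2 w3 w4 w5 w6 w1)"
  by (simp add: multiratio_def mult_ac)

lemma multiratio_minus_oneD:
  assumes "multiratio a b c d e f = -1"
  shows "(a - b) * (c - d) * (e - f) = - ((b - c) * (d - e) * (f - a))"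
    and "a \<noteq> b" "b \<noteq> c" "c \<noteq> d" "d \<noteq> e" "e \<noteq> f" "f \<noteq> a"
proof -
  have den: "(b - c) * (d - e) * (f - a) \<noteq> 0"
    using assms by (auto simp: multiratio_def)
  then show num: "(a - b) * (c - d) * (e - f) = - ((b - c) * (d - e) * (f - a))"
    using assms by (simp add: multiratio_def divide_eq_eq)
  show "a \<noteq> b" "c \<noteq> d" "e \<noteq> f"
    using num den by auto
  show "b \<noteq> c" "d \<noteq> e" "f \<noteq> a"
    using den by auto
qed

lemma multiratio_holonomy:
  assumes "multiratio a b c d e f = -1" "p \<noteq> b" "p \<noteq> d"
  shows "(f - e) / (f - a) * ((p - f) / (p - b)) * ((a - b) / (c - b))
       = (f - p) / (d - p) * ((d - e) / (d - c)) * ((p - d) / (p - b))"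
proof -
  note mr = multiratio_minus_oneD[OF assms(1)]
  have nonzero: "(f - a) * (p - b) * (c - b) \<noteq> 0" "(d - p) * (d - c) * (p - b) \<noteq> 0"
    using mr assms(2,3) by auto
  have "((f - e) * (p - f) * (a - b)) / ((f - a) * (p - b) * (c - b))
      = ((f - p) * (d - e) * (p - d)) / ((d - p) * (d - c) * (p - b))"
    unfolding frac_eq_eq[OF nonzero] using mr(1) by algebra
  then show ?thesis
    by simp
qed

section \<open>The fgh-equation on a single triangle\<close>

definition fgh_triangle ::
    "complex \<Rightarrow> complex \<Rightarrow> complex \<Rightarrow> complex \<Rightarrow> complex \<Rightarrow> complex \<Rightarrow> bool" where
  "fgh_triangle u1 u2 u3 v1 v2 v3 \<longleftrightarrow>
     u1 \<noteq> u2 \<and> u2 \<noteq> u3 \<and> u3 \<noteq> u1 \<and> v1 \<noteq> v2 \<and> v2 \<noteq> v3 \<and> v3 \<noteq> v1 \<and>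
     (u2 - u1) / (u3 - u2) = (v3 - v2) / (v1 - v3)"

abbreviation fgh_on ::
    "(complex \<Rightarrow> complex) \<Rightarrow> (complex \<Rightarrow> complex) \<Rightarrow> complex \<Rightarrow> complex \<Rightarrow> complex \<Rightarrow> bool" where
  "fgh_on u v z1 z2 z3 \<equiv> fgh_triangle (u z1) (u z2) (u z3) (v z1) (v z2) (v z3)"

lemma fgh_eq_iff_fgh_on: "fgh_eq u v \<longleftrightarrow> (\<forall>z1 z2 z3. pos_triangle z1 z2 z3 \<longrightarrow> fgh_on u v z1 z2 z3)"
  by (simp add: fgh_eq_def fgh_triangle_def)

lemma fgh_triangle_iff_scaled:
  "fgh_triangle u1 u2 u3 v1 v2 v3 \<longleftrightarrow>
     u1 \<noteq> u2 \<and> u2 \<noteq> u3 \<and> u3 \<noteq> u1 \<and>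
     (\<exists>m. m \<noteq> 0 \<and> v2 - v1 = m * (u1 - u3) \<and> v3 - v2 = m * (u2 - u1))"
proof
  assume fgh: "fgh_triangle u1 u2 u3 v1 v2 v3"
  then have u: "u1 \<noteq> u2" "u2 \<noteq> u3" "u3 \<noteq> u1" and "v1 \<noteq> v2" "v3 \<noteq> v1"
    and ratio: "(u2 - u1) / (u3 - u2) = (v3 - v2) / (v1 - v3)"
    by (simp_all add: fgh_triangle_def)
  define m where "m = (v2 - v1) / (u1 - u3)"
  have "m \<noteq> 0" "v2 - v1 = m * (u1 - u3)"
    using u \<open>v1 \<noteq> v2\<close> by (simp_all add: m_def)
  moreover have "(u2 - u1) * (v1 - v3) = (v3 - v2) * (u3 - u2)"
    using ratio u \<open>v3 \<noteq> v1\<close> by (simp add: frac_eq_eq)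
  then have "v3 - v2 = m * (u2 - u1)"
    using u by (simp add: m_def field_simps)
  ultimately show "u1 \<noteq> u2 \<and> u2 \<noteq> u3 \<and> u3 \<noteq> u1 \<and>
     (\<exists>m. m \<noteq> 0 \<and> v2 - v1 = m * (u1 - u3) \<and> v3 - v2 = m * (u2 - u1))"
    using u by blast
next
  assume "u1 \<noteq> u2 \<and> u2 \<noteq> u3 \<and> u3 \<noteq> u1 \<and>
     (\<exists>m. m \<noteq> 0 \<and> v2 - v1 = m * (u1 - u3) \<and> v3 - v2 = m * (u2 - u1))"
  then obtain m where u: "u1 \<noteq> u2" "u2 \<noteq> u3" "u3 \<noteq> u1" and m: "m \<noteq> 0"
    and v21: "v2 - v1 = m * (u1 - u3)" and v32: "v3 - v2 = m * (u2 - u1)" by blast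
  have v13: "v1 - v3 = m * (u3 - u2)"
    using v21 v32 by algebra
  have "v2 - v1 \<noteq> 0" "v3 - v2 \<noteq> 0" "v1 - v3 \<noteq> 0"
    using u m unfolding v21 v32 v13 by simp_all
  moreover have "(v3 - v2) / (v1 - v3) = (u2 - u1) / (u3 - u2)"
    using m unfolding v32 v13 by simp
  ultimately show "fgh_triangle u1 u2 u3 v1 v2 v3"
    using u unfolding fgh_triangle_def by simp
qed

lemma fgh_triangle_rotate_iff:
  "fgh_triangle u1 u2 u3 v1 v2 v3 \<longleftrightarrow> fgh_triangle u2 u3 u1 v2 v3 v1"
proof -
  have rotate: "fgh_triangle u2 u3 u1 v2 v3 v1"
    if fgh: "fgh_triangle u1 u2 u3 v1 v2 v3" for u1 u2 u3 v1 v2 v3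
  proof -
    obtain m where "u1 \<noteq> u2" "u2 \<noteq> u3" "u3 \<noteq> u1" "m \<noteq> 0"
      and v: "v2 - v1 = m * (u1 - u3)" "v3 - v2 = m * (u2 - u1)"
      using fgh unfolding fgh_triangle_iff_scaled by blast
    moreover have "v1 - v3 = m * (u3 - u2)"
      using v by algebra
    ultimately show ?thesis
      unfolding fgh_triangle_iff_scaled by blast
  qed
  show ?thesis
    using rotate[of u1 u2 u3 v1 v2 v3] rotate[of u2 u3 u1 v2 v3 v1] rotate[of u3 u1 u2 v3 v1 v2]
    by blast
qed

lemma fgh_triangle_star_relation:
  assumes "fgh_triangle u0 u1 u2 v0 v1 v2"
  shows "(u2 - u0) * (v1 - v0) = (u1 - u0) * (v1 - v0) + (u2 - u0) * (v2 - v0)"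
proof -
  obtain m where "v1 - v0 = m * (u0 - u2)" "v2 - v1 = m * (u1 - u0)"
    using assms unfolding fgh_triangle_iff_scaled by blast
  then show ?thesis by algebra
qed

lemma fgh_triangle_partners_proportional:
  assumes "fgh_triangle u1 u2 u3 v1 v2 v3" "fgh_triangle u1 u2 u3 w1 w2 w3"
  shows "(w3 - w2) / (v3 - v2) = (w2 - w1) / (v2 - v1)"
    and "(w3 - w1) / (v3 - v1) = (w2 - w1) / (v2 - v1)"
proof -
  obtain m where "u1 \<noteq> u3" "u1 \<noteq> u2" "u2 \<noteq> u3" "m \<noteq> 0"
    and v: "v2 - v1 = m * (u1 - u3)" "v3 - v2 = m * (u2 - u1)"
    using assms(1) unfolding fgh_triangle_iff_scaled by blast
  moreover obtain n where w: "w2 - w1 = n * (u1 - u3)" "w3 - w2 = n * (u2 - u1)"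
    using assms(2) unfolding fgh_triangle_iff_scaled by blast
  moreover have "v3 - v1 = m * (u2 - u3)" "w3 - w1 = n * (u2 - u3)"
    using v w by algebra+
  ultimately show "(w3 - w2) / (v3 - v2) = (w2 - w1) / (v2 - v1)"
    and "(w3 - w1) / (v3 - v1) = (w2 - w1) / (v2 - v1)"
    by simp_all
qed

lemma fgh_triangle_affine:
  assumes "fgh_triangle u1 u2 u3 v1 v2 v3" "a \<noteq> 0"
  shows "fgh_triangle u1 u2 u3 (a * v1 + b) (a * v2 + b) (a * v3 + b)"
    and "fgh_triangle (a * u1 + b) (a * u2 + b) (a * u3 + b) v1 v2 v3"
proof -
  have diff: "(a * x + b) - (a * y + b) = a * (x - y)" for x y
    by (simp add: algebra_simps)
  show "fgh_triangle u1 u2 u3 (a * v1 + b) (a * v2 + b) (a * v3 + b)"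
    and "fgh_triangle (a * u1 + b) (a * u2 + b) (a * u3 + b) v1 v2 v3"
    using assms unfolding fgh_triangle_def diff by simp_all
qed

lemma fgh_triangle_cycle:
  assumes "fgh_triangle u1 u2 u3 v1 v2 v3" "fgh_triangle v1 v2 v3 w1 w2 w3"
  shows "fgh_triangle w1 w2 w3 u1 u2 u3"
proof -
  obtain m where u: "u1 \<noteq> u2" "u2 \<noteq> u3" "u3 \<noteq> u1" and "m \<noteq> 0"
    and v: "v2 - v1 = m * (u1 - u3)" "v3 - v2 = m * (u2 - u1)"
    using assms(1) unfolding fgh_triangle_iff_scaled by blast
  obtain n where "n \<noteq> 0" and w: "w2 - w1 = n * (v1 - v3)" "w3 - w2 = n * (v2 - v1)"
    using assms(2) unfolding fgh_triangle_iff_scaled by blast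
  define k where "k = m * n"
  have "k \<noteq> 0"
    using \<open>m \<noteq> 0\<close> \<open>n \<noteq> 0\<close> by (simp add: k_def)
  have w': "w2 - w1 = k * (u3 - u2)" "w3 - w2 = k * (u1 - u3)" "w1 - w3 = k * (u2 - u1)"
    using v w unfolding k_def by algebra+
  then have "w1 \<noteq> w2" "w2 \<noteq> w3" "w3 \<noteq> w1"
    using u \<open>k \<noteq> 0\<close> by auto
  moreover have "u2 - u1 = inverse k * (w1 - w3)" "u3 - u2 = inverse k * (w2 - w1)"
    using w' \<open>k \<noteq> 0\<close> by simp_all
  ultimately show ?thesis
    unfolding fgh_triangle_iff_scaled using \<open>k \<noteq> 0\<close> by auto
qed

lemma fgh_eq_affine:
  assumes "fgh_eq u v" "a \<noteq> 0"
  shows "fgh_eq u (\<lambda>z. a * v z + b)" "fgh_eq (\<lambda>z. a * u z + b) v"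
  using assms fgh_triangle_affine unfolding fgh_eq_iff_fgh_on by simp_all

lemma fgh_eq_cycle:
  assumes "fgh_eq u v" "fgh_eq v w"
  shows "fgh_eq w u"
  using assms fgh_triangle_cycle unfolding fgh_eq_iff_fgh_on by blast

section \<open>Solutions have multi-ratio \<open>-1\<close>\<close>

text \<open>Here \<open>a, \<dots>, f\<close> and \<open>a', \<dots>, f'\<close> stand for the differences \<open>u (z + \<epsilon>\<^sup>k) - u z\<close>
  and \<open>v (z + \<epsilon>\<^sup>k) - v z\<close>; the six relations come from the six triangles around \<open>z\<close>
  (\<open>fgh_triangle_star_relation\<close>).\<close>

lemma multiratio_star:
  fixes a b c d e f a' b' c' d' e' f' :: complex
  assumes "b * a' = a * a' + b * b'" "b * c' = c * c' + b * b'"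
    and "d * c' = c * c' + d * d'" "d * e' = e * e' + d * d'"
    and "f * e' = e * e' + f * f'" "f * a' = a * a' + f * f'"
    and "a' * c' * e' \<noteq> 0" "b * b' * d * d' * f * f' \<noteq> 0"
  shows "multiratio a b c d e f = -1"
proof -
  let ?W = "b * b' * d * d' * f * f'"
  have "(a - b) * (c - d) * (e - f) * (a' * c' * e')
      = - ((b * a' - a * a') * (d * c' - c * c') * (f * e' - e * e'))"
    by algebra
  also have "\<dots> = - ?W"
    using assms(1,3,5) by algebra
  finally have num: "(a - b) * (c - d) * (e - f) * (a' * c' * e') = - ?W" .
  have "(b - c) * (d - e) * (f - a) * (a' * c' * e')
      = (b * c' - c * c') * (d * e' - e * e') * (f * a' - a * a')"
    by algebra
  also have "\<dots> = ?W"
    using assms(2,4,6) by algebra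
  finally have den: "(b - c) * (d - e) * (f - a) * (a' * c' * e') = ?W" .
  have "multiratio a b c d e f
      = ((a - b) * (c - d) * (e - f) * (a' * c' * e'))
        / ((b - c) * (d - e) * (f - a) * (a' * c' * e'))"
    using assms(7) by (simp add: multiratio_def)
  also have "\<dots> = -1"
    using num den assms(8) by simp
  finally show ?thesis .
qed

lemma hexagon_multiratio_of_fgh:
  assumes "fgh_eq u v" "z \<in> TL_V"
  shows "hexagon_multiratio u z = -1" "hexagon_multiratio v z = -1"
proof -
  define U where "U k = u (z + epsilon ^ k) - u z" for k :: nat
  define V where "V k = v (z + epsilon ^ k) - v z" for k :: nat
  note fgh =
    pos_triangles_around[OF assms(2), THEN assms(1)[unfolded fgh_eq_iff_fgh_on, rule_format]]
  note rel = fgh[THEN fgh_triangle_star_relation, folded U_def V_def]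
  have "U k \<noteq> 0 \<and> V k \<noteq> 0" if "k \<in> {0, 1, 2, 3, 4, 5}" for k
    using that fgh unfolding U_def V_def fgh_triangle_def by auto
  then have nonzero: "V 0 * V 2 * V 4 \<noteq> 0" "U 1 * V 1 * U 3 * V 3 * U 5 * V 5 \<noteq> 0"
    "U 1 * U 3 * U 5 \<noteq> 0" "V 2 * U 2 * V 4 * U 4 * V 0 * U 0 \<noteq> 0"
    by simp_all
  have "multiratio (U 0) (U 1) (U 2) (U 3) (U 4) (U 5) = -1"
    using rel nonzero(1,2) by (rule multiratio_star)
  then show "hexagon_multiratio u z = -1"
    unfolding U_def hexagon_multiratio_def multiratio_translate .
  txt \<open>The relations are symmetric under exchanging \<open>u\<close> and \<open>v\<close> together with a shift of
    the neighbours by one.\<close>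
  have "multiratio (V 1) (V 2) (V 3) (V 4) (V 5) (V 0) = -1"
    by (rule multiratio_star[where a = "V 1" and b = "V 2" and c = "V 3" and d = "V 4" and e = "V 5"
          and f = "V 0" and a' = "U 1" and b' = "U 2" and c' = "U 3" and d' = "U 4" and e' = "U 5"
          and f' = "U 0"])
      (use rel nonzero(3,4) in \<open>simp_all add: ac_simps\<close>)
  then have "multiratio (V 0) (V 1) (V 2) (V 3) (V 4) (V 5) = -1"
    using multiratio_rotate[of "V 0" "V 1" "V 2" "V 3" "V 4" "V 5"] by simp
  then show "hexagon_multiratio v z = -1"
    unfolding V_def hexagon_multiratio_def multiratio_translate .
qed

lemma MR_minus_one_of_fgh:
  assumes "fgh_eq u v"
  shows "MR_minus_one u" "MR_minus_one v"
  using hexagon_multiratio_of_fgh[OF assms] unfolding MR_minus_one_iff by blast+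

section \<open>Integration on \<open>\<int> \<times> \<int>\<close>\<close>

lemma int_orbit_exists:
  fixes T :: "int \<Rightarrow> 'a \<Rightarrow> 'a"
  assumes "\<And>x. bij (T x)"
  obtains f where "f 0 = c" "\<And>x. f (x + 1) = T x (f x)"
proof -
  define fwd where "fwd = rec_nat c (\<lambda>n w. T (int n) w)"
  define bwd where "bwd = rec_nat c (\<lambda>n w. inv (T (- int n - 1)) w)"
  define f where "f x = (if 0 \<le> x then fwd (nat x) else bwd (nat (- x)))" for x
  have "f (x + 1) = T x (f x)" for x
  proof (cases "0 \<le> x")
    case True
    then have "nat (x + 1) = Suc (nat x)" by simp
    with True show ?thesis by (simp add: f_def fwd_def)
  next
    case False
    define n where "n = nat (- x - 1)"
    have x: "x = - int n - 1" using False by (simp add: n_def)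
    have "f x = inv (T x) (bwd n)"
      using False by (simp add: f_def bwd_def x nat_add_distrib)
    moreover have "f (x + 1) = bwd n"
    proof (cases "n = 0")
      case True
      with x show ?thesis by (simp add: f_def fwd_def bwd_def)
    next
      case False
      with x show ?thesis by (simp add: f_def)
    qed
    ultimately show ?thesis
      using assms[of x] by (simp add: bij_inv_eq_iff)
  qed
  moreover have "f 0 = c" by (simp add: f_def fwd_def)
  ultimately show thesis using that by blast
qed

lemma lattice_section_exists:
  fixes H V :: "int \<Rightarrow> int \<Rightarrow> 'a \<Rightarrow> 'a"
  assumes bij_H: "\<And>x y. bij (H x y)" and bij_V: "\<And>x y. bij (V x y)"
    and commute: "\<And>x y w. V (x + 1) y (H x y w) = H x (y + 1) (V x y w)"
  obtains F where "F 0 0 = c"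
    "\<And>x y. F (x + 1) y = H x y (F x y)" "\<And>x y. F x (y + 1) = V x y (F x y)"
proof -
  obtain g where g0: "g 0 = c" and g_step: "\<And>x. g (x + 1) = H x 0 (g x)"
    using int_orbit_exists[of "\<lambda>x. H x 0"] bij_H by blast
  have "\<forall>x. \<exists>f. f 0 = g x \<and> (\<forall>y. f (y + 1) = V x y (f y))"
    using int_orbit_exists[of "V x" "g x" for x] bij_V by metis
  then obtain F where F0: "\<And>x. F x 0 = g x" and F_step: "\<And>x y. F x (y + 1) = V x y (F x y)"
    by metis
  have "F (x + 1) y = H x y (F x y)" for x y
  proof (induction y rule: int_induct[where k = 0])
    case base
    show ?case using F0 g_step by simp
  next
    case (step1 y)
    then show ?case using F_step commute by simp
  next
    case (step2 y)
    have "V (x + 1) (y - 1) (F (x + 1) (y - 1)) = V (x + 1) (y - 1) (H x (y - 1) (F x (y - 1)))"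
      using step2.IH F_step[of "x + 1" "y - 1"] F_step[of x "y - 1"] commute[of x "y - 1"] by simp
    then show ?case
      using bij_V[of "x + 1" "y - 1"] by (simp add: bij_def inj_eq)
  qed
  then show thesis
    using that F0 g0 F_step by blast
qed

lemma int_shift_invariant:
  assumes "\<And>x :: int. h (x + 1) = h x"
  shows "h x = h 0"
proof (induction x rule: int_induct[where k = 0])
  case (step2 x)
  then show ?case using assms[of "x - 1"] by simp
qed (use assms in simp_all)

lemma int_pair_shift_invariant:
  fixes g :: "int \<Rightarrow> int \<Rightarrow> 'a"
  assumes "\<And>x y :: int. g (x + 1) y = g x y" "\<And>x y. g x (y + 1) = g x y"
  shows "g x y = g 0 0"
  using int_shift_invariant[of "g x" y] int_shift_invariant[of "\<lambda>x. g x 0" x] assms by simp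

lemma TL_V_shift_invariant:
  assumes "\<And>z. z \<in> TL_V \<Longrightarrow> f (z + 1) = f z" "\<And>z. z \<in> TL_V \<Longrightarrow> f (z + omega) = f z"
    and "z \<in> TL_V"
  shows "f z = f 0"
proof -
  have "f (lattice_pt x y) = f (lattice_pt 0 0)" for x y
    by (rule int_pair_shift_invariant[where g = "\<lambda>x y. f (lattice_pt x y)"])
      (use assms(1,2) lattice_pt_shifts(1,2) TL_V_iff in metis)+
  then show ?thesis
    using assms(3) by (auto simp: TL_V_iff lattice_pt_def)
qed

lemma lattice_product_section_exists:
  fixes p q :: "int \<Rightarrow> int \<Rightarrow> 'a :: field"
  assumes nonzero: "\<And>x y. p x y \<noteq> 0" "\<And>x y. q x y \<noteq> 0"
    and commute: "\<And>x y. p x y * q (x + 1) y = q x y * p x (y + 1)"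
  obtains m where "\<And>x y. m x y \<noteq> 0"
    "\<And>x y. m (x + 1) y = p x y * m x y" "\<And>x y. m x (y + 1) = q x y * m x y"
proof -
  have bij_scale: "bij (\<lambda>w. c * w)" if "c \<noteq> 0" for c :: 'a
    by (rule o_bij[where g = "\<lambda>w. w / c"]) (use that in \<open>auto simp: fun_eq_iff\<close>)
  have "q (x + 1) y * (p x y * w) = p x (y + 1) * (q x y * w)" for x y w
    using commute[of x y] by (metis mult.assoc mult.commute)
  then obtain m where m0: "m 0 0 = 1" and m_x: "\<And>x y. m (x + 1) y = p x y * m x y"
    and m_y: "\<And>x y. m x (y + 1) = q x y * m x y"
    using lattice_section_exists[of "\<lambda>x y w. p x y * w" "\<lambda>x y w. q x y * w"] bij_scale nonzero
    by metis
  have "(m x y = 0) = (m 0 0 = 0)" for x y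
    by (rule int_pair_shift_invariant) (simp_all add: m_x m_y nonzero)
  then have m_nonzero: "m x y \<noteq> 0" for x y
    using m0 by simp
  show thesis
    by (rule that[OF m_nonzero m_x m_y])
qed

section \<open>Existence of a partner\<close>

abbreviation lattice_hexagon_multiratio :: "(int \<Rightarrow> int \<Rightarrow> complex) \<Rightarrow> int \<Rightarrow> int \<Rightarrow> complex" where
  "lattice_hexagon_multiratio U x y \<equiv>
     multiratio (U (x + 1) y) (U (x + 1) (y + 1)) (U x (y + 1))
                (U (x - 1) y) (U (x - 1) (y - 1)) (U x (y - 1))"

text \<open>\<open>m x y\<close> and \<open>n x y\<close> are the factors of \<open>fgh_triangle_iff_scaled\<close> on the triangles
  \<open>(x, y), (x + 1, y), (x + 1, y + 1)\<close> and \<open>(x, y), (x, y + 1), (x + 1, y + 1)\<close>; the three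
  equations say that two triangles sharing an edge (diagonal, vertical, horizontal) prescribe the
  same increment of the partner function along it.\<close>

definition compatible_multipliers ::
    "(int \<Rightarrow> int \<Rightarrow> complex) \<Rightarrow> (int \<Rightarrow> int \<Rightarrow> complex) \<Rightarrow> (int \<Rightarrow> int \<Rightarrow> complex) \<Rightarrow> bool" where
  "compatible_multipliers U m n \<longleftrightarrow> (\<forall>x y. m x y \<noteq> 0 \<and> n x y \<noteq> 0 \<and>
     n x y * (U x (y + 1) - U (x + 1) (y + 1)) = m x y * (U (x + 1) y - U (x + 1) (y + 1)) \<and>
     n (x + 1) y * (U (x + 1) y - U (x + 2) (y + 1)) = m x y * (U (x + 1) y - U x y) \<and>
     m x (y + 1) * (U x (y + 1) - U (x + 1) (y + 2)) = n x y * (U x (y + 1) - U x y))"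

lemma lattice_edges_distinct:
  assumes "\<And>x y. lattice_hexagon_multiratio U x y = -1"
  shows "U (x + 1) y \<noteq> U x y" "U x (y + 1) \<noteq> U x y" "U (x + 1) (y + 1) \<noteq> U x y"
  using multiratio_minus_oneD(3)[OF assms[of x "y - 1"]]
    multiratio_minus_oneD(2)[OF assms[of "x - 1" y]]
    multiratio_minus_oneD(4)[OF assms[of "x + 1" y]]
  by auto

lemma compatible_multipliers_exist:
  assumes hex: "\<And>x y. lattice_hexagon_multiratio U x y = -1"
  obtains m n where "compatible_multipliers U m n"
proof -
  note distinct = lattice_edges_distinct[OF hex]
  have two: "x + 1 + 1 = x + (2 :: int)" for x by simp
  have distinct': "U (x + 1) y \<noteq> U (x + 2) (y + 1)" "U x (y + 1) \<noteq> U (x + 1) (y + 2)" for x y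
    using distinct(3)[of "x + 1" y] distinct(3)[of x "y + 1"] by (simp_all add: two)
  txt \<open>The ratios of the multipliers of two adjacent triangles, across a diagonal, vertical and
    horizontal edge.\<close>
  define rho where "rho x y = (U (x + 1) y - U (x + 1) (y + 1)) / (U x (y + 1) - U (x + 1) (y + 1))"
    for x y
  define alpha where "alpha x y = (U (x + 1) y - U x y) / (U (x + 1) y - U (x + 2) (y + 1))" for x y
  define beta where "beta x y = (U x (y + 1) - U x y) / (U x (y + 1) - U (x + 1) (y + 2))" for x y
  have rho_nonzero: "rho x y \<noteq> 0" for x y
    using distinct(1)[of x "y + 1"] distinct(2)[of "x + 1" y] by (simp add: rho_def)
  have "alpha x y \<noteq> 0" "beta x y \<noteq> 0" for x y
    using distinct distinct' by (simp_all add: alpha_def beta_def)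
  define px where "px x y = alpha x y / rho (x + 1) y" for x y
  define py where "py x y = rho x y * beta x y" for x y
  have px_nonzero: "px x y \<noteq> 0" and py_nonzero: "py x y \<noteq> 0" for x y
    using rho_nonzero \<open>alpha x y \<noteq> 0\<close> \<open>beta x y \<noteq> 0\<close> by (simp_all add: px_def py_def)
  have "px x y * py (x + 1) y = py x y * px x (y + 1)" for x y
  proof -
    txt \<open>Going around the vertex \<open>(x + 1, y + 1)\<close> through its six triangles.\<close>
    have "multiratio (U (x + 2) (y + 1)) (U (x + 2) (y + 2)) (U (x + 1) (y + 2))
                     (U x (y + 1)) (U x y) (U (x + 1) y) = -1"
      using hex[of "x + 1" "y + 1"] by (simp add: two)
    moreover have "U (x + 1) (y + 1) \<noteq> U (x + 2) (y + 2)" "U (x + 1) (y + 1) \<noteq> U x (y + 1)"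
      using distinct(3)[of "x + 1" "y + 1"] distinct(1)[of x "y + 1"] by (simp_all add: two)
    ultimately have "alpha x y * beta (x + 1) y * rho (x + 1) (y + 1)
        = rho x y * beta x y * alpha x (y + 1)"
      unfolding alpha_def beta_def rho_def two by (rule multiratio_holonomy)
    then show ?thesis
      using rho_nonzero[of "x + 1" y] rho_nonzero[of "x + 1" "y + 1"]
      by (simp add: px_def py_def field_simps)
  qed
  then obtain m where m_nonzero: "\<And>x y. m x y \<noteq> 0"
    and m_x: "\<And>x y. m (x + 1) y = px x y * m x y" and m_y: "\<And>x y. m x (y + 1) = py x y * m x y"
    using lattice_product_section_exists px_nonzero py_nonzero by metis
  define n where "n x y = m x y * rho x y" for x y
  have "compatible_multipliers U m n"
    unfolding compatible_multipliers_def
  proof (intro allI conjI)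
    fix x y
    show "m x y \<noteq> 0" "n x y \<noteq> 0"
      using m_nonzero rho_nonzero by (simp_all add: n_def)
    show "n x y * (U x (y + 1) - U (x + 1) (y + 1)) = m x y * (U (x + 1) y - U (x + 1) (y + 1))"
      using distinct(1)[of x "y + 1"] by (simp add: n_def rho_def)
    show "n (x + 1) y * (U (x + 1) y - U (x + 2) (y + 1)) = m x y * (U (x + 1) y - U x y)"
      using distinct'(1)[of x y] rho_nonzero[of "x + 1" y]
      by (simp add: n_def m_x px_def alpha_def)
    show "m x (y + 1) * (U x (y + 1) - U (x + 1) (y + 2)) = n x y * (U x (y + 1) - U x y)"
      using distinct'(2)[of x y] by (simp add: n_def m_y py_def beta_def)
  qed
  then show thesis
    by (rule that)
qed

lemma fgh_lattice_solution_exists: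
  assumes hex: "\<And>x y. lattice_hexagon_multiratio U x y = -1"
  obtains V where
    "\<And>x y. fgh_triangle (U x y) (U (x + 1) y) (U (x + 1) (y + 1))
                         (V x y) (V (x + 1) y) (V (x + 1) (y + 1))"
    "\<And>x y. fgh_triangle (U x y) (U x (y + 1)) (U (x + 1) (y + 1))
                         (V x y) (V x (y + 1)) (V (x + 1) (y + 1))"
proof -
  note distinct = lattice_edges_distinct[OF hex]
  obtain m n where "compatible_multipliers U m n"
    using hex by (rule compatible_multipliers_exist)
  then have nonzero: "\<And>x y. m x y \<noteq> 0" "\<And>x y. n x y \<noteq> 0"
    and diagonal: "\<And>x y. n x y * (U x (y + 1) - U (x + 1) (y + 1))
                          = m x y * (U (x + 1) y - U (x + 1) (y + 1))"
    and vertical: "\<And>x y. n (x + 1) y * (U (x + 1) y - U (x + 2) (y + 1))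
                          = m x y * (U (x + 1) y - U x y)"
    and horizontal: "\<And>x y. m x (y + 1) * (U x (y + 1) - U (x + 1) (y + 2))
                            = n x y * (U x (y + 1) - U x y)"
    unfolding compatible_multipliers_def by blast+
  define dx where "dx x y = m x y * (U x y - U (x + 1) (y + 1))" for x y
  define dy where "dy x y = n x y * (U x y - U (x + 1) (y + 1))" for x y
  have dy_next: "dy (x + 1) y = m x y * (U (x + 1) y - U x y)" for x y
    using vertical[of x y] by (simp add: dy_def add.assoc)
  have dx_next: "dx x (y + 1) = n x y * (U x (y + 1) - U x y)" for x y
    using horizontal[of x y] by (simp add: dx_def add.assoc)
  have closed: "w + dx x y + dy (x + 1) y = w + dy x y + dx x (y + 1)" for x y w
  proof -
    have "dx x y + dy (x + 1) y = m x y * (U (x + 1) y - U (x + 1) (y + 1))"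
      unfolding dy_next by (simp add: dx_def algebra_simps)
    also have "\<dots> = n x y * (U x (y + 1) - U (x + 1) (y + 1))"
      by (rule diagonal[symmetric])
    also have "\<dots> = dy x y + dx x (y + 1)"
      unfolding dx_next by (simp add: dy_def algebra_simps)
    finally show ?thesis by (simp add: add.assoc)
  qed
  obtain V where V_x: "\<And>x y. V (x + 1) y = V x y + dx x y"
    and V_y: "\<And>x y. V x (y + 1) = V x y + dy x y"
    using lattice_section_exists[of "\<lambda>x y w. w + dx x y" "\<lambda>x y w. w + dy x y"] closed bij_plus_right
    by metis
  show thesis
  proof (rule that)
    fix x y
    have "V (x + 1) y - V x y = m x y * (U x y - U (x + 1) (y + 1))"
      by (simp only: V_x dx_def add_diff_cancel_left')
    moreover have "V (x + 1) (y + 1) - V (x + 1) y = m x y * (U (x + 1) y - U x y)"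
      by (simp only: V_y dy_next add_diff_cancel_left')
    ultimately show "fgh_triangle (U x y) (U (x + 1) y) (U (x + 1) (y + 1))
                                  (V x y) (V (x + 1) y) (V (x + 1) (y + 1))"
      unfolding fgh_triangle_iff_scaled
      using distinct(1)[of x y] distinct(2)[of "x + 1" y] distinct(3)[of x y] nonzero(1)[of x y]
      by auto
    have "V x (y + 1) - V x y = n x y * (U x y - U (x + 1) (y + 1))"
      by (simp only: V_y dy_def add_diff_cancel_left')
    moreover have "V (x + 1) (y + 1) - V x (y + 1) = n x y * (U x (y + 1) - U x y)"
      by (simp only: V_x dx_next add_diff_cancel_left')
    ultimately show "fgh_triangle (U x y) (U x (y + 1)) (U (x + 1) (y + 1))
                                  (V x y) (V x (y + 1)) (V (x + 1) (y + 1))"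
      unfolding fgh_triangle_iff_scaled
      using distinct(2)[of x y] distinct(1)[of x "y + 1"] distinct(3)[of x y] nonzero(2)[of x y]
      by auto
  qed
qed

lemma fgh_eq_if_up_down:
  assumes "\<And>z. z \<in> TL_V \<Longrightarrow> fgh_on u v z (z + 1) (z + (1 + omega))"
    and "\<And>z. z \<in> TL_V \<Longrightarrow> fgh_on u v z (z + omega) (z + (1 + omega))"
  shows "fgh_eq u v"
  unfolding fgh_eq_iff_fgh_on
proof (intro allI impI)
  fix z1 z2 z3
  assume "pos_triangle z1 z2 z3"
  then show "fgh_on u v z1 z2 z3"
  proof (cases rule: pos_triangle_cases)
    case (up z)
    then show ?thesis
      using assms(1)[of z] fgh_triangle_rotate_iff by (elim disjE) (metis prod.inject)+
  next
    case (down z)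
    then show ?thesis
      using assms(2)[of z] fgh_triangle_rotate_iff by (elim disjE) (metis prod.inject)+
  qed
qed

lemma fgh_partner_exists:
  assumes "MR_minus_one u"
  shows "\<exists>v. fgh_eq u v"
proof -
  define U where "U x y = u (lattice_pt x y)" for x y
  have "lattice_hexagon_multiratio U x y = -1" for x y
  proof -
    have "hexagon_multiratio u (lattice_pt x y) = -1"
      using assms lattice_pt_in_TL_V unfolding MR_minus_one_iff by blast
    then show ?thesis
      unfolding hexagon_multiratio_def epsilon_powers lattice_pt_shifts U_def .
  qed
  then obtain V where
    up: "\<And>x y. fgh_triangle (U x y) (U (x + 1) y) (U (x + 1) (y + 1))
                            (V x y) (V (x + 1) y) (V (x + 1) (y + 1))"
    and down: "\<And>x y. fgh_triangle (U x y) (U x (y + 1)) (U (x + 1) (y + 1))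
                                (V x y) (V x (y + 1)) (V (x + 1) (y + 1))"
    by (rule fgh_lattice_solution_exists) (rule that)
  define v where "v z = case_prod V (inv (case_prod lattice_pt) z)" for z
  have "inj (case_prod lattice_pt)"
    by (auto intro: injI simp: lattice_pt_eq_iff)
  then have v_lattice_pt: "v (lattice_pt x y) = V x y" for x y
    unfolding v_def using inv_f_f[of "case_prod lattice_pt" "(x, y)"] by simp
  have "fgh_eq u v"
    by (rule fgh_eq_if_up_down) (auto simp: TL_V_iff v_lattice_pt up down simp flip: U_def)
  then show ?thesis
    by blast
qed

section \<open>Uniqueness of the partner\<close>

lemma fgh_partners_edge_ratio:
  assumes "fgh_eq u v" "fgh_eq u w"
  obtains a where "a \<noteq> 0"
    "\<And>z. z \<in> TL_V \<Longrightarrow> w (z + 1) - w z = a * (v (z + 1) - v z)"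
    "\<And>z. z \<in> TL_V \<Longrightarrow> w (z + omega) - w z = a * (v (z + omega) - v z)"
proof -
  define r where "r p q = (w q - w p) / (v q - v p)" for p q
  have ac: "z + 1 + omega = z + (1 + omega)" "z + omega + 1 = z + (1 + omega)" for z
    by (simp_all add: ac_simps)
  have shifts: "z + 1 \<in> TL_V" "z + omega \<in> TL_V" if "z \<in> TL_V" for z
    using TL_V_add_unit[OF that] by simp_all
  note fgh = assms[unfolded fgh_eq_iff_fgh_on, rule_format]
  note up = fgh[OF pos_triangle_up_down(1)] and down = fgh[OF pos_triangle_up_down(2)]
  have r_up: "r (z + 1) (z + (1 + omega)) = r z (z + 1)" "r z (z + (1 + omega)) = r z (z + 1)"
    if "z \<in> TL_V" for z
    using fgh_triangle_partners_proportional[OF up[OF that]] unfolding r_def by simp_all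
  have r_down: "r (z + omega) (z + (1 + omega)) = r z (z + omega)"
      "r z (z + (1 + omega)) = r z (z + omega)"
    if "z \<in> TL_V" for z
    using fgh_triangle_partners_proportional[OF down[OF that]] unfolding r_def by simp_all
  define a where "a = r 0 1"
  have r_const: "r z (z + 1) = a" if "z \<in> TL_V" for z
  proof -
    define K where "K z = r z (z + 1)" for z
    have "K z = K 0"
    proof (rule TL_V_shift_invariant[OF _ _ that])
      fix z assume z: "z \<in> TL_V"
      show "K (z + 1) = K z"
        using r_up[OF shifts(1)[OF z]] r_down[OF shifts(1)[OF z]] r_up[OF z] by (simp add: K_def ac)
      show "K (z + omega) = K z"
        using r_down[OF z] r_up[OF z] by (simp add: K_def ac)
    qed
    then show ?thesis
      by (simp add: K_def a_def)
  qed
  have zero: "0 \<in> TL_V"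
    using lattice_pt_in_TL_V[of 0 0] by (simp add: lattice_pt_def)
  have distinct: "v (z + 1) \<noteq> v z" "v (z + omega) \<noteq> v z" "w (z + 1) \<noteq> w z" if "z \<in> TL_V" for z
    using up[OF that] down[OF that] unfolding fgh_triangle_def by auto
  show thesis
  proof (rule that)
    show "a \<noteq> 0"
      using distinct[OF zero] by (simp add: a_def r_def)
    fix z assume z: "z \<in> TL_V"
    show "w (z + 1) - w z = a * (v (z + 1) - v z)"
      using r_const[OF z] distinct[OF z] by (simp add: r_def divide_eq_eq)
    have "r z (z + omega) = a"
      using r_const[OF z] r_up(2)[OF z] r_down(2)[OF z] by simp
    then show "w (z + omega) - w z = a * (v (z + omega) - v z)"
      using distinct[OF z] by (simp add: r_def divide_eq_eq)
  qed
qed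

lemma fgh_partner_unique:
  assumes "fgh_eq u v" "fgh_eq u w"
  shows "\<exists>a b. a \<noteq> 0 \<and> (\<forall>z \<in> TL_V. w z = a * v z + b)"
proof -
  obtain a where "a \<noteq> 0"
    and horizontal: "\<And>z. z \<in> TL_V \<Longrightarrow> w (z + 1) - w z = a * (v (z + 1) - v z)"
    and vertical: "\<And>z. z \<in> TL_V \<Longrightarrow> w (z + omega) - w z = a * (v (z + omega) - v z)"
    using fgh_partners_edge_ratio[OF assms] by blast
  have "w z - a * v z = w 0 - a * v 0" if "z \<in> TL_V" for z
    using TL_V_shift_invariant[of "\<lambda>z. w z - a * v z", OF _ _ that] horizontal vertical
    by (simp add: algebra_simps)
  then show ?thesis
    using \<open>a \<noteq> 0\<close> by (intro exI[of _ a] exI[of _ "w 0 - a * v 0"]) (simp add: algebra_simps)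
qed

theorem theorem13:
  shows "(\<forall>u v. fgh_eq u v \<longrightarrow> MR_minus_one u \<and> MR_minus_one v)
    \<and> (\<forall>u. MR_minus_one u \<longrightarrow>
         (\<exists>v. fgh_eq u v
              \<and> (\<forall>a b. a \<noteq> 0 \<longrightarrow> fgh_eq u (\<lambda>z. a * v z + b))
              \<and> (\<forall>v'. fgh_eq u v' \<longrightarrow> (\<exists>a b. a \<noteq> 0 \<and> (\<forall>z \<in> TL_V. v' z = a * v z + b)))
              \<and> MR_minus_one v))
    \<and> (\<forall>u v. fgh_eq u v \<longrightarrow>
         (\<exists>w. fgh_eq v w \<and> fgh_eq w u
              \<and> (\<forall>a b. a \<noteq> 0 \<longrightarrow> fgh_eq v (\<lambda>z. a * w z + b) \<and> fgh_eq (\<lambda>z. a * w z + b) u)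
              \<and> (\<forall>w'. fgh_eq v w' \<and> fgh_eq w' u \<longrightarrow>
                     (\<exists>a b. a \<noteq> 0 \<and> (\<forall>z \<in> TL_V. w' z = a * w z + b)))
              \<and> MR_minus_one w))"
  apply (intro conjI allI impI)
  subgoal by (rule MR_minus_one_of_fgh)
  subgoal by (rule MR_minus_one_of_fgh)
  subgoal premises MR for u
  proof -
    obtain v where "fgh_eq u v"
      using fgh_partner_exists[OF MR] by blast
    then show ?thesis
      using fgh_eq_affine(1) fgh_partner_unique MR_minus_one_of_fgh(2) by blast
  qed
  subgoal premises uv for u v
  proof -
    obtain w where "fgh_eq v w"
      using fgh_partner_exists[OF MR_minus_one_of_fgh(2)[OF uv]] by blast
    moreover from uv this have "fgh_eq w u"
      by (rule fgh_eq_cycle)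
    ultimately show ?thesis
      using fgh_eq_affine fgh_partner_unique MR_minus_one_of_fgh(2) by blast
  qed
  done

end
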